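(* Let $\mathrm{k}$ be an infinite field. For $n,m\in\{2,3\}$, the $\mathrm{k}$-algebra $\mathrm{k}[T]/(T^n)\times\mathrm{k}[T]/(T^m)$ has infinitely many subalgebras.
   Context: Subalgebras are unital (contain $1$). *)

theory Defs
  imports "HOL-Computational_Algebra.Polynomial"
begin

text \<open>The truncated polynomial algebra k[T]/(T^n), represented by the canonical
  remainders modulo T^n (polynomials of degree < n), with multiplication
  followed by reduction modulo T^n.\<close>

definition trunc_alg :: "nat \<Rightarrow> 'a::field poly set" where
  "trunc_alg n = {p. p mod monom 1 n = p}"

definition prod_alg :: "nat \<Rightarrow> nat \<Rightarrow> ('a::field poly \<times> 'a poly) set" where
  "prod_alg n m = trunc_alg n \<times> trunc_alg m"

definition prod_mult :: "nat \<Rightarrow> nat \<Rightarrow> ('a::field poly \<times> 'a poly) \<Rightarrow> ('a poly \<times> 'a poly) \<Rightarrow> ('a poly \<times> 'a poly)" where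
  "prod_mult n m x y = ((fst x * fst y) mod monom 1 n, (snd x * snd y) mod monom 1 m)"

definition is_subalgebra :: "nat \<Rightarrow> nat \<Rightarrow> ('a::field poly \<times> 'a poly) set \<Rightarrow> bool" where
  "is_subalgebra n m S \<longleftrightarrow>
     S \<subseteq> prod_alg n m \<and>
     (1, 1) \<in> S \<and>
     (\<forall>x\<in>S. \<forall>y\<in>S. (fst x + fst y, snd x + snd y) \<in> S) \<and>
     (\<forall>c. \<forall>x\<in>S. (smult c (fst x), smult c (snd x)) \<in> S) \<and>
     (\<forall>x\<in>S. \<forall>y\<in>S. prod_mult n m x y \<in> S)"

end

theory Submission
  imports Defs
begin

text \<open>For \<open>n, m \<ge> 2\<close> and every \<open>c \<in> k\<close>, the pairs \<open>(p, q)\<close> with \<open>p(0) = q(0)\<close> and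
  \<open>q'(0) = c p'(0)\<close> form a subalgebra: both conditions only involve the coefficients of
  \<open>1\<close> and \<open>T\<close>, which are unaffected by the truncations and multiply like dual numbers,
  \<open>(a + bT)(a' + b'T) = aa' + (ab' + a'b)T\<close>.  The element \<open>(T, cT)\<close> recovers \<open>c\<close>
  from the subalgebra, so an infinite field yields infinitely many distinct subalgebras.\<close>

lemma coeff_mod_monom:
  fixes p :: "'a::field poly"
  assumes "i < n"
  shows "coeff (p mod monom 1 n) i = coeff p i"
proof -
  have "coeff p i = coeff (p div monom 1 n * monom 1 n) i + coeff (p mod monom 1 n) i"
    by (metis coeff_add div_mult_mod_eq)
  moreover have "coeff (p div monom 1 n * monom 1 n) i = 0"
    using assms by (simp add: mult.commute[of _ "monom 1 n"] coeff_monom_mult)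
  ultimately show ?thesis by simp
qed

lemma coeff_mult_1:
  "coeff (p * q) (Suc 0) = coeff p 0 * coeff q 1 + coeff p 1 * coeff q 0"
  by (simp add: coeff_mult)

lemma trunc_alg_add: "p \<in> trunc_alg n \<Longrightarrow> q \<in> trunc_alg n \<Longrightarrow> p + q \<in> trunc_alg n"
  unfolding trunc_alg_def by (simp add: poly_mod_add_left)

lemma trunc_alg_smult: "p \<in> trunc_alg n \<Longrightarrow> smult c p \<in> trunc_alg n"
  unfolding trunc_alg_def by (simp add: mod_smult_left)

lemma mod_monom_in_trunc_alg: "p mod monom 1 n \<in> trunc_alg n"
  unfolding trunc_alg_def by simp

lemma one_in_trunc_alg: "0 < n \<Longrightarrow> 1 \<in> trunc_alg n"
  unfolding trunc_alg_def by (auto intro!: mod_poly_less simp: degree_monom_eq)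

lemma monom_1_in_trunc_alg: "1 < n \<Longrightarrow> monom c 1 \<in> trunc_alg n"
  unfolding trunc_alg_def
  by (cases "c = 0") (auto intro!: mod_poly_less simp: degree_monom_eq)

definition jet_subalgebra :: "nat \<Rightarrow> nat \<Rightarrow> 'a::field \<Rightarrow> ('a poly \<times> 'a poly) set" where
  "jet_subalgebra n m c =
     {x \<in> prod_alg n m. coeff (fst x) 0 = coeff (snd x) 0 \<and> coeff (snd x) 1 = c * coeff (fst x) 1}"

lemma is_subalgebra_jet_subalgebra:
  assumes "2 \<le> n" "2 \<le> m"
  shows "is_subalgebra n m (jet_subalgebra n m c)"
  unfolding is_subalgebra_def
proof (intro conjI ballI allI)
  show "jet_subalgebra n m c \<subseteq> prod_alg n m"
    unfolding jet_subalgebra_def by blast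
  show "(1, 1) \<in> jet_subalgebra n m c"
    using assms by (simp add: jet_subalgebra_def prod_alg_def one_in_trunc_alg)
  fix x y assume x: "x \<in> jet_subalgebra n m c" and y: "y \<in> jet_subalgebra n m c"
  show "(fst x + fst y, snd x + snd y) \<in> jet_subalgebra n m c"
    using x y by (auto simp: jet_subalgebra_def prod_alg_def trunc_alg_add algebra_simps)
  show "prod_mult n m x y \<in> jet_subalgebra n m c"
    using x y assms
    by (auto simp: jet_subalgebra_def prod_alg_def prod_mult_def mod_monom_in_trunc_alg
        coeff_mod_monom coeff_mult_0 coeff_mult_1 algebra_simps)
next
  fix d x assume "x \<in> jet_subalgebra n m c"
  then show "(smult d (fst x), smult d (snd x)) \<in> jet_subalgebra n m c"
    by (auto simp: jet_subalgebra_def prod_alg_def trunc_alg_smult)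
qed

lemma inj_jet_subalgebra:
  assumes "2 \<le> n" "2 \<le> m"
  shows "inj (jet_subalgebra n m)"
proof (rule injI)
  fix c d :: 'a
  assume "jet_subalgebra n m c = jet_subalgebra n m d"
  moreover have "(monom 1 1, monom c 1) \<in> jet_subalgebra n m c"
    using assms monom_1_in_trunc_alg[of n 1] monom_1_in_trunc_alg[of m c]
    by (simp add: jet_subalgebra_def prod_alg_def)
  ultimately have "(monom 1 1, monom c 1) \<in> jet_subalgebra n m d"
    by simp
  then show "c = d"
    by (simp add: jet_subalgebra_def)
qed

lemma infinite_subalgebras:
  assumes "infinite (UNIV :: 'a::field set)" and "2 \<le> n" "2 \<le> m"
  shows "infinite {S :: ('a poly \<times> 'a poly) set. is_subalgebra n m S}"
proof (rule infinite_super)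
  show "range (jet_subalgebra n m :: 'a \<Rightarrow> _) \<subseteq> {S. is_subalgebra n m S}"
    using is_subalgebra_jet_subalgebra[OF assms(2,3)] by blast
  show "infinite (range (jet_subalgebra n m :: 'a \<Rightarrow> _))"
    using assms by (simp add: finite_image_iff inj_jet_subalgebra)
qed

theorem lemma3p7:
  assumes "infinite (UNIV :: 'a::field set)"
    and "n \<in> {2, 3}" and "m \<in> {2, 3}"
  shows "infinite {S :: ('a poly \<times> 'a poly) set. is_subalgebra n m S}"
  using assms by (intro infinite_subalgebras) auto

end
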